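(* Let $\sigma$ be a signature containing $\triangleright$, let $\mathcal{A}$ be a $\sigma$-algebra and let $\theta$ be a representation of $\mathcal{A}$ by partial functions. Then $\theta$ is atomic if and only if $\theta$ is locally complete.
   Context: Signatures $\sigma$ are sets of operation symbols drawn from: $\triangleright$ (antidomain restriction), $;$ (composition), $\wedge$ (intersection), $\mathrm{upd}$ (update), $\sqcup$ (preferential union), $\mathsf{D}$ (domain), $\mathsf{A}$ (antidomain), interpreted on partial functions as: $f \triangleright g = \{(x,y) \in g : x \notin \mathrm{dom}(f)\}$; $f;g$ = relational composition ($f$ first); $f\wedge g = f\cap g$; $\mathrm{upd}(f,g)(x)$ is $f(x)$ if $f(x)$ defined and $g(x)$ undefined, $g(x)$ if both defined, undefined otherwise; $(f\sqcup g)(x)$ is $f(x)$ if defined, else $g(x)$; $\mathsf{D}(f)$ = identity on $\mathrm{dom}(f)$; $\mathsf{A}(f)$ = identity on the complement of $\mathrm{dom}(f)$ in the base. A representation by partial functions is an isomorphism onto a $\sigma$-algebra of partial functions with these operations. Define $0 := a\triangleright a$, $a\lhd b := (a\triangleright b)\triangleright b$, $a \le b :\iff a\lhd b = a$; for representable algebras this is a partial order with least element $0$ and $a\le b \iff \theta(a)\subseteq\theta(b)$. An atom is a minimal nonzero element; $\mathrm{At}(\mathcal{A})$ is the set of atoms. $\theta$ is atomic if whenever $(x,y)\in\theta(a)$ there is an atom $b\le a$ with $(x,y)\in\theta(b)$. For $a\in\mathcal{A}$, ${\downarrow}a=\{b:b\le a\}$ is a Boolean algebra with bottom $0$, top $a$,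 meet $\lhd$ and complement $b\mapsto b\triangleright a$, and $\theta$ restricts to a representation of it as a field of sets over $\theta(a)$; $\theta$ is locally complete if for every $a$ this restriction is complete (sends every existing join to the union and every existing meet of a nonempty set to the intersection). *)

theory Defs
  imports Main
begin

datatype opsym = AntiRes | Comp | Meet | Upd | PrefUnion | DomOp | AntiDomOp

text \<open>A structure interpreting all symbols; a sigma-algebra only uses (and is
  closed under) the operations whose symbols lie in sigma.\<close>
record 'a alg =
  carrier :: "'a set"
  antires :: "'a \<Rightarrow> 'a \<Rightarrow> 'a"
  comp :: "'a \<Rightarrow> 'a \<Rightarrow> 'a"
  meet :: "'a \<Rightarrow> 'a \<Rightarrow> 'a"
  upd :: "'a \<Rightarrow> 'a \<Rightarrow> 'a"
  punion :: "'a \<Rightarrow> 'a \<Rightarrow> 'a"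
  dom_op :: "'a \<Rightarrow> 'a"
  adom_op :: "'a \<Rightarrow> 'a"

definition sigma_algebra :: "opsym set \<Rightarrow> 'a alg \<Rightarrow> bool" where
  "sigma_algebra \<sigma> \<A> \<longleftrightarrow>
     (AntiRes \<in> \<sigma> \<longrightarrow> (\<forall>a\<in>carrier \<A>. \<forall>b\<in>carrier \<A>. antires \<A> a b \<in> carrier \<A>)) \<and>
     (Comp \<in> \<sigma> \<longrightarrow> (\<forall>a\<in>carrier \<A>. \<forall>b\<in>carrier \<A>. comp \<A> a b \<in> carrier \<A>)) \<and>
     (Meet \<in> \<sigma> \<longrightarrow> (\<forall>a\<in>carrier \<A>. \<forall>b\<in>carrier \<A>. meet \<A> a b \<in> carrier \<A>)) \<and>
     (Upd \<in> \<sigma> \<longrightarrow> (\<forall>a\<in>carrier \<A>. \<forall>b\<in>carrier \<A>. upd \<A> a b \<in> carrier \<A>)) \<and>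
     (PrefUnion \<in> \<sigma> \<longrightarrow> (\<forall>a\<in>carrier \<A>. \<forall>b\<in>carrier \<A>. punion \<A> a b \<in> carrier \<A>)) \<and>
     (DomOp \<in> \<sigma> \<longrightarrow> (\<forall>a\<in>carrier \<A>. dom_op \<A> a \<in> carrier \<A>)) \<and>
     (AntiDomOp \<in> \<sigma> \<longrightarrow> (\<forall>a\<in>carrier \<A>. adom_op \<A> a \<in> carrier \<A>))"

definition pf_antires :: "('x \<times> 'x) set \<Rightarrow> ('x \<times> 'x) set \<Rightarrow> ('x \<times> 'x) set" where
  "pf_antires f g = {(x, y) \<in> g. x \<notin> Domain f}"

definition pf_upd :: "('x \<times> 'x) set \<Rightarrow> ('x \<times> 'x) set \<Rightarrow> ('x \<times> 'x) set" where
  "pf_upd f g = {(x, y) \<in> f. x \<notin> Domain g} \<union> {(x, y) \<in> g. x \<in> Domain f}"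

definition pf_punion :: "('x \<times> 'x) set \<Rightarrow> ('x \<times> 'x) set \<Rightarrow> ('x \<times> 'x) set" where
  "pf_punion f g = f \<union> {(x, y) \<in> g. x \<notin> Domain f}"

definition pf_dom :: "('x \<times> 'x) set \<Rightarrow> ('x \<times> 'x) set" where
  "pf_dom f = Id_on (Domain f)"

definition pf_adom :: "'x set \<Rightarrow> ('x \<times> 'x) set \<Rightarrow> ('x \<times> 'x) set" where
  "pf_adom X f = Id_on (X - Domain f)"

definition pf_representation ::
  "opsym set \<Rightarrow> 'a alg \<Rightarrow> 'x set \<Rightarrow> ('a \<Rightarrow> ('x \<times> 'x) set) \<Rightarrow> bool" where
  "pf_representation \<sigma> \<A> X \<theta> \<longleftrightarrow>
     inj_on \<theta> (carrier \<A>) \<and>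
     (\<forall>a\<in>carrier \<A>. \<theta> a \<subseteq> X \<times> X \<and> single_valued (\<theta> a)) \<and>
     (AntiRes \<in> \<sigma> \<longrightarrow> (\<forall>a\<in>carrier \<A>. \<forall>b\<in>carrier \<A>.
        \<theta> (antires \<A> a b) = pf_antires (\<theta> a) (\<theta> b))) \<and>
     (Comp \<in> \<sigma> \<longrightarrow> (\<forall>a\<in>carrier \<A>. \<forall>b\<in>carrier \<A>.
        \<theta> (comp \<A> a b) = \<theta> a O \<theta> b)) \<and>
     (Meet \<in> \<sigma> \<longrightarrow> (\<forall>a\<in>carrier \<A>. \<forall>b\<in>carrier \<A>.
        \<theta> (meet \<A> a b) = \<theta> a \<inter> \<theta> b)) \<and>
     (Upd \<in> \<sigma> \<longrightarrow> (\<forall>a\<in>carrier \<A>. \<forall>b\<in>carrier \<A>.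
        \<theta> (upd \<A> a b) = pf_upd (\<theta> a) (\<theta> b))) \<and>
     (PrefUnion \<in> \<sigma> \<longrightarrow> (\<forall>a\<in>carrier \<A>. \<forall>b\<in>carrier \<A>.
        \<theta> (punion \<A> a b) = pf_punion (\<theta> a) (\<theta> b))) \<and>
     (DomOp \<in> \<sigma> \<longrightarrow> (\<forall>a\<in>carrier \<A>. \<theta> (dom_op \<A> a) = pf_dom (\<theta> a))) \<and>
     (AntiDomOp \<in> \<sigma> \<longrightarrow> (\<forall>a\<in>carrier \<A>. \<theta> (adom_op \<A> a) = pf_adom X (\<theta> a)))"

definition alg_zero :: "'a alg \<Rightarrow> 'a \<Rightarrow> 'a" where
  "alg_zero \<A> a = antires \<A> a a"

definition alg_leq :: "'a alg \<Rightarrow> 'a \<Rightarrow> 'a \<Rightarrow> bool" where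
  "alg_leq \<A> a b \<longleftrightarrow> antires \<A> (antires \<A> a b) b = a"

definition is_atom :: "'a alg \<Rightarrow> 'a \<Rightarrow> bool" where
  "is_atom \<A> b \<longleftrightarrow> b \<in> carrier \<A> \<and> b \<noteq> alg_zero \<A> b \<and>
     (\<forall>c\<in>carrier \<A>. alg_leq \<A> c b \<and> c \<noteq> alg_zero \<A> c \<longrightarrow> c = b)"

definition atomic_rep :: "'a alg \<Rightarrow> ('a \<Rightarrow> ('x \<times> 'x) set) \<Rightarrow> bool" where
  "atomic_rep \<A> \<theta> \<longleftrightarrow>
     (\<forall>a\<in>carrier \<A>. \<forall>p\<in>\<theta> a. \<exists>b\<in>carrier \<A>. is_atom \<A> b \<and> alg_leq \<A> b a \<and> p \<in> \<theta> b)"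

definition down :: "'a alg \<Rightarrow> 'a \<Rightarrow> 'a set" where
  "down \<A> a = {b \<in> carrier \<A>. alg_leq \<A> b a}"

definition is_join_in :: "'a alg \<Rightarrow> 'a set \<Rightarrow> 'a set \<Rightarrow> 'a \<Rightarrow> bool" where
  "is_join_in \<A> D S j \<longleftrightarrow> j \<in> D \<and> (\<forall>s\<in>S. alg_leq \<A> s j) \<and>
     (\<forall>u\<in>D. (\<forall>s\<in>S. alg_leq \<A> s u) \<longrightarrow> alg_leq \<A> j u)"

definition is_meet_in :: "'a alg \<Rightarrow> 'a set \<Rightarrow> 'a set \<Rightarrow> 'a \<Rightarrow> bool" where
  "is_meet_in \<A> D S m \<longleftrightarrow> m \<in> D \<and> (\<forall>s\<in>S. alg_leq \<A> m s) \<and>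
     (\<forall>l\<in>D. (\<forall>s\<in>S. alg_leq \<A> l s) \<longrightarrow> alg_leq \<A> l m)"

definition locally_complete_rep :: "'a alg \<Rightarrow> ('a \<Rightarrow> ('x \<times> 'x) set) \<Rightarrow> bool" where
  "locally_complete_rep \<A> \<theta> \<longleftrightarrow>
     (\<forall>a\<in>carrier \<A>.
        (\<forall>S j. S \<subseteq> down \<A> a \<and> is_join_in \<A> (down \<A> a) S j \<longrightarrow> \<theta> j = (\<Union>s\<in>S. \<theta> s)) \<and>
        (\<forall>S m. S \<subseteq> down \<A> a \<and> S \<noteq> {} \<and> is_meet_in \<A> (down \<A> a) S m \<longrightarrow>
            \<theta> m = (\<Inter>s\<in>S. \<theta> s)))"

end

theory Submission
  imports Defs
begin

text \<open>Everything is transported along \<open>\<theta>\<close> into partial functions, where \<open>a \<le> b\<close> becomes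
  inclusion and \<open>(b \<triangleright> a) \<triangleright> a\<close> the restriction of \<open>\<theta> a\<close> to the domain of \<open>\<theta> b\<close>.
  The decisive fact is that an atom \<open>b\<close> is domain-tight: if \<open>\<theta> b\<close> and \<open>\<theta> s\<close> are compatible and
  their domains meet, then \<open>b \<le> s\<close>. If \<open>\<theta>\<close> is atomic, a pair in a join but outside the union
  would lie in an atom \<open>b\<close> disjoint from every member, so \<open>b \<triangleright> j\<close> is a smaller upper bound; and
  a pair in every member of a meet lies in an atom below all of them. Conversely, if the pair
  \<open>p \<in> \<theta> a\<close> lies in no atom below \<open>a\<close>, then \<open>a\<close> is the join of the elements below \<open>a\<close> avoiding
  \<open>p\<close>: for an upper bound \<open>u\<close>, the complement \<open>u \<triangleright> a\<close> is either zero or, not being an atom,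
  has a nonzero part avoiding \<open>p\<close>, which would have to lie below both \<open>u\<close> and \<open>u \<triangleright> a\<close>.
  Local completeness then puts \<open>p\<close> into the union of these elements, which is absurd.\<close>

lemma restrict_Domain_subset:
  assumes "single_valued R" "S \<subseteq> R" "T \<subseteq> R"
  shows "{(x, y) \<in> S. x \<in> Domain T} \<subseteq> T"
  using assms by (auto dest: single_valuedD)

locale antires_representation =
  fixes \<A> :: "'a alg" and \<theta> :: "'a \<Rightarrow> ('x \<times> 'x) set"
  assumes antires_closed: "a \<in> carrier \<A> \<Longrightarrow> b \<in> carrier \<A> \<Longrightarrow> antires \<A> a b \<in> carrier \<A>"
    and inj_rep: "inj_on \<theta> (carrier \<A>)"
    and single_valued_rep: "a \<in> carrier \<A> \<Longrightarrow> single_valued (\<theta> a)"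
    and rep_antires: "a \<in> carrier \<A> \<Longrightarrow> b \<in> carrier \<A> \<Longrightarrow>
      \<theta> (antires \<A> a b) = pf_antires (\<theta> a) (\<theta> b)"
begin

abbreviation antires_op :: "'a \<Rightarrow> 'a \<Rightarrow> 'a" (infixl "\<triangleright>" 70)
  where "a \<triangleright> b \<equiv> antires \<A> a b"

lemma rep_eqD: "a \<in> carrier \<A> \<Longrightarrow> b \<in> carrier \<A> \<Longrightarrow> \<theta> a = \<theta> b \<Longrightarrow> a = b"
  using inj_rep by (meson inj_onD)

lemma rep_antires_restrict:
  assumes "a \<in> carrier \<A>" "b \<in> carrier \<A>"
  shows "\<theta> ((b \<triangleright> a) \<triangleright> a) = {(x, y) \<in> \<theta> a. x \<in> Domain (\<theta> b)}"
  using assms antires_closed by (auto simp: rep_antires pf_antires_def)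

lemma leq_iff_subset:
  assumes "a \<in> carrier \<A>" "b \<in> carrier \<A>"
  shows "alg_leq \<A> b a \<longleftrightarrow> \<theta> b \<subseteq> \<theta> a"
proof
  assume "alg_leq \<A> b a"
  then show "\<theta> b \<subseteq> \<theta> a"
    using rep_antires_restrict[OF assms] unfolding alg_leq_def by auto
next
  assume "\<theta> b \<subseteq> \<theta> a"
  then have "{(x, y) \<in> \<theta> a. x \<in> Domain (\<theta> b)} = \<theta> b"
    using restrict_Domain_subset[OF single_valued_rep[OF assms(1)], of "\<theta> a" "\<theta> b"] by auto
  then show "alg_leq \<A> b a"
    unfolding alg_leq_def using rep_antires_restrict[OF assms] assms antires_closed rep_eqD
    by metis
qed

lemma eq_zero_iff_empty:
  assumes "c \<in> carrier \<A>"
  shows "c = alg_zero \<A> c \<longleftrightarrow> \<theta> c = {}"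
proof -
  have "\<theta> (alg_zero \<A> c) = {}"
    unfolding alg_zero_def using assms by (auto simp: rep_antires pf_antires_def)
  then show ?thesis
    using assms antires_closed rep_eqD unfolding alg_zero_def by metis
qed

lemma down_iff:
  "a \<in> carrier \<A> \<Longrightarrow> c \<in> down \<A> a \<longleftrightarrow> c \<in> carrier \<A> \<and> \<theta> c \<subseteq> \<theta> a"
  unfolding down_def using leq_iff_subset by auto

lemma is_atom_iff:
  "is_atom \<A> b \<longleftrightarrow> b \<in> carrier \<A> \<and> \<theta> b \<noteq> {} \<and>
     (\<forall>c\<in>carrier \<A>. \<theta> c \<subseteq> \<theta> b \<and> \<theta> c \<noteq> {} \<longrightarrow> c = b)"
  unfolding is_atom_def using leq_iff_subset eq_zero_iff_empty by blast

lemma atom_subset_if_Domain_meets: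
  assumes "is_atom \<A> b" "s \<in> carrier \<A>" "c \<in> carrier \<A>"
    and "\<theta> b \<subseteq> \<theta> c" "\<theta> s \<subseteq> \<theta> c"
    and "Domain (\<theta> b) \<inter> Domain (\<theta> s) \<noteq> {}"
  shows "\<theta> b \<subseteq> \<theta> s"
proof -
  have b: "b \<in> carrier \<A>" using assms(1) is_atom_iff by blast
  let ?r = "(b \<triangleright> s) \<triangleright> s"
  have r: "?r \<in> carrier \<A>" using antires_closed b assms(2) by blast
  have "\<theta> ?r \<subseteq> \<theta> b"
    using rep_antires_restrict[OF assms(2) b]
      restrict_Domain_subset[OF single_valued_rep[OF assms(3)] assms(5,4)] by simp
  moreover have "\<theta> ?r \<noteq> {}"
    using rep_antires_restrict[OF assms(2) b] assms(6) by auto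
  ultimately have "?r = b" using assms(1) r is_atom_iff by blast
  then show ?thesis using rep_antires_restrict[OF assms(2) b] by auto
qed

lemma join_rep_eq_Union_if_atomic:
  assumes atomic: "atomic_rep \<A> \<theta>" and a: "a \<in> carrier \<A>"
    and S: "S \<subseteq> down \<A> a" and join: "is_join_in \<A> (down \<A> a) S j"
  shows "\<theta> j = (\<Union>s\<in>S. \<theta> s)"
proof (rule ccontr)
  have j: "j \<in> carrier \<A>" "\<theta> j \<subseteq> \<theta> a"
    using join a down_iff unfolding is_join_in_def by auto
  have S_carrier: "\<And>s. s \<in> S \<Longrightarrow> s \<in> carrier \<A>" using S a down_iff by blast
  have S_below: "\<And>s. s \<in> S \<Longrightarrow> \<theta> s \<subseteq> \<theta> j"
    using join S_carrier j leq_iff_subset unfolding is_join_in_def by blast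
  assume "\<theta> j \<noteq> (\<Union>s\<in>S. \<theta> s)"
  then obtain p where p: "p \<in> \<theta> j" "\<And>s. s \<in> S \<Longrightarrow> p \<notin> \<theta> s" using S_below by blast
  obtain b where b: "b \<in> carrier \<A>" "is_atom \<A> b" "alg_leq \<A> b j" "p \<in> \<theta> b"
    using atomic j p unfolding atomic_rep_def by blast
  have bj: "\<theta> b \<subseteq> \<theta> j" using b j leq_iff_subset by blast
  have disjoint: "Domain (\<theta> b) \<inter> Domain (\<theta> s) = {}" if "s \<in> S" for s
    using atom_subset_if_Domain_meets[OF b(2) S_carrier[OF that] j(1) bj S_below[OF that]]
      p(2)[OF that] b(4) by blast
  let ?u = "b \<triangleright> j"
  have u: "?u \<in> carrier \<A>" using antires_closed b(1) j(1) by blast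
  have rep_u: "\<theta> ?u = {(x, y) \<in> \<theta> j. x \<notin> Domain (\<theta> b)}"
    using b(1) j(1) by (simp add: rep_antires pf_antires_def)
  have "?u \<in> down \<A> a" using u rep_u j(2) a down_iff by auto
  moreover have "\<forall>s\<in>S. alg_leq \<A> s ?u"
  proof
    fix s assume "s \<in> S"
    then have "\<theta> s \<subseteq> \<theta> ?u" using rep_u S_below disjoint by fastforce
    then show "alg_leq \<A> s ?u" using leq_iff_subset u S_carrier \<open>s \<in> S\<close> by blast
  qed
  ultimately have "\<theta> j \<subseteq> \<theta> ?u" using join u j leq_iff_subset unfolding is_join_in_def by blast
  then show False using p(1) b(4) rep_u by fastforce
qed

lemma meet_rep_eq_Inter_if_atomic:
  assumes atomic: "atomic_rep \<A> \<theta>" and a: "a \<in> carrier \<A>"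
    and S: "S \<subseteq> down \<A> a" "S \<noteq> {}" and meet: "is_meet_in \<A> (down \<A> a) S m"
  shows "\<theta> m = (\<Inter>s\<in>S. \<theta> s)"
proof
  have S_carrier: "\<And>s. s \<in> S \<Longrightarrow> s \<in> carrier \<A>"
    and S_below: "\<And>s. s \<in> S \<Longrightarrow> \<theta> s \<subseteq> \<theta> a" using S a down_iff by auto
  have m: "m \<in> carrier \<A>" using meet a down_iff unfolding is_meet_in_def by auto
  have "\<theta> m \<subseteq> \<theta> s" if "s \<in> S" for s
    using meet that leq_iff_subset[OF S_carrier[OF that] m] unfolding is_meet_in_def by blast
  then show "\<theta> m \<subseteq> (\<Inter>s\<in>S. \<theta> s)" by blast
  show "(\<Inter>s\<in>S. \<theta> s) \<subseteq> \<theta> m"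
  proof
    fix p assume p: "p \<in> (\<Inter>s\<in>S. \<theta> s)"
    obtain s0 where s0: "s0 \<in> S" using S(2) by blast
    obtain b where b: "b \<in> carrier \<A>" "is_atom \<A> b" "alg_leq \<A> b s0" "p \<in> \<theta> b"
      using atomic S_carrier[OF s0] p s0 unfolding atomic_rep_def by blast
    have ba: "\<theta> b \<subseteq> \<theta> a"
      using b(3) S_below[OF s0] leq_iff_subset[OF S_carrier[OF s0] b(1)] by blast
    have "alg_leq \<A> b s" if s: "s \<in> S" for s
    proof -
      have "fst p \<in> Domain (\<theta> b) \<inter> Domain (\<theta> s)"
        using p s b(4) by (cases p) (auto intro: DomainI)
      then have "\<theta> b \<subseteq> \<theta> s"
        using atom_subset_if_Domain_meets[OF b(2) S_carrier[OF s] a ba S_below[OF s]] by blast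
      then show ?thesis using leq_iff_subset[OF S_carrier[OF s] b(1)] by blast
    qed
    moreover have "b \<in> down \<A> a" using b(1) ba a down_iff by blast
    ultimately have "alg_leq \<A> b m" using meet unfolding is_meet_in_def by blast
    then show "p \<in> \<theta> m" using leq_iff_subset[OF m b(1)] b(4) by blast
  qed
qed

lemma non_atom_has_part_avoiding:
  assumes "c \<in> carrier \<A>" "\<theta> c \<noteq> {}" "\<not> is_atom \<A> c"
  obtains e where "e \<in> carrier \<A>" "\<theta> e \<subseteq> \<theta> c" "\<theta> e \<noteq> {}" "p \<notin> \<theta> e"
proof -
  obtain d where d: "d \<in> carrier \<A>" "\<theta> d \<subseteq> \<theta> c" "\<theta> d \<noteq> {}" "d \<noteq> c"
    using assms is_atom_iff by blast
  let ?e = "d \<triangleright> c"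
  have rep_e: "\<theta> ?e = {(x, y) \<in> \<theta> c. x \<notin> Domain (\<theta> d)}"
    using d(1) assms(1) by (simp add: rep_antires pf_antires_def)
  have "\<theta> ?e \<noteq> {}"
  proof
    assume "\<theta> ?e = {}"
    then have "\<theta> c \<subseteq> \<theta> d"
      using restrict_Domain_subset[OF single_valued_rep[OF assms(1)] subset_refl d(2)] rep_e
      by fastforce
    then show False using d rep_eqD assms(1) by blast
  qed
  moreover have "\<theta> ?e \<subseteq> \<theta> c" using rep_e by auto
  moreover have "p \<in> \<theta> d \<Longrightarrow> p \<notin> \<theta> ?e" using rep_e by fastforce
  ultimately show ?thesis
    using that d antires_closed[OF d(1) assms(1)] by blast
qed

lemma is_join_of_parts_avoiding:
  assumes a: "a \<in> carrier \<A>"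
    and no_atom: "\<not> (\<exists>b\<in>carrier \<A>. is_atom \<A> b \<and> alg_leq \<A> b a \<and> p \<in> \<theta> b)"
  shows "is_join_in \<A> (down \<A> a) {c \<in> down \<A> a. p \<notin> \<theta> c} a"
  unfolding is_join_in_def
proof (intro conjI ballI impI)
  let ?T = "{c \<in> down \<A> a. p \<notin> \<theta> c}"
  show "a \<in> down \<A> a" using a down_iff by blast
  show "alg_leq \<A> s a" if "s \<in> ?T" for s using that unfolding down_def by blast
  fix u assume u_down: "u \<in> down \<A> a" and upper: "\<forall>s\<in>?T. alg_leq \<A> s u"
  have u: "u \<in> carrier \<A>" "\<theta> u \<subseteq> \<theta> a" using u_down a down_iff by auto
  let ?c = "u \<triangleright> a"
  have c: "?c \<in> carrier \<A>" using antires_closed u(1) a by blast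
  have rep_c: "\<theta> ?c = {(x, y) \<in> \<theta> a. x \<notin> Domain (\<theta> u)}"
    using u(1) a by (simp add: rep_antires pf_antires_def)
  have T_below_c_empty: "\<theta> e = {}" if "e \<in> ?T" "\<theta> e \<subseteq> \<theta> ?c" for e
  proof -
    have "\<theta> e \<subseteq> \<theta> u" using that upper leq_iff_subset u(1) a down_iff by blast
    then show ?thesis using that(2) rep_c by fastforce
  qed
  have "\<theta> ?c = {}"
  proof (cases "p \<in> \<theta> ?c")
    case False
    then have "?c \<in> ?T" using c rep_c a down_iff by auto
    then show ?thesis using T_below_c_empty by blast
  next
    case True
    then have "\<not> is_atom \<A> ?c" using no_atom c rep_c a leq_iff_subset by auto
    then obtain e where "e \<in> carrier \<A>" "\<theta> e \<subseteq> \<theta> ?c" "\<theta> e \<noteq> {}" "p \<notin> \<theta> e"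
      using non_atom_has_part_avoiding[OF c] True by blast
    moreover from this have "e \<in> ?T" using rep_c a down_iff by auto
    ultimately show ?thesis using T_below_c_empty by blast
  qed
  then have "\<theta> a \<subseteq> \<theta> u"
    using restrict_Domain_subset[OF single_valued_rep[OF a] subset_refl u(2)] rep_c by fastforce
  then show "alg_leq \<A> a u" using leq_iff_subset u(1) a by blast
qed

lemma locally_complete_if_atomic:
  assumes "atomic_rep \<A> \<theta>"
  shows "locally_complete_rep \<A> \<theta>"
  unfolding locally_complete_rep_def
proof (intro ballI conjI allI impI)
  fix a S j assume "a \<in> carrier \<A>" "S \<subseteq> down \<A> a \<and> is_join_in \<A> (down \<A> a) S j"
  then show "\<theta> j = (\<Union>s\<in>S. \<theta> s)"
    using join_rep_eq_Union_if_atomic[OF assms] by blast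
next
  fix a S m assume "a \<in> carrier \<A>" "S \<subseteq> down \<A> a \<and> S \<noteq> {} \<and> is_meet_in \<A> (down \<A> a) S m"
  then show "\<theta> m = (\<Inter>s\<in>S. \<theta> s)"
    using meet_rep_eq_Inter_if_atomic[OF assms] by blast
qed

lemma atomic_if_locally_complete:
  assumes lc: "locally_complete_rep \<A> \<theta>"
  shows "atomic_rep \<A> \<theta>"
  unfolding atomic_rep_def
proof (intro ballI)
  fix a p assume a: "a \<in> carrier \<A>" and p: "p \<in> \<theta> a"
  show "\<exists>b\<in>carrier \<A>. is_atom \<A> b \<and> alg_leq \<A> b a \<and> p \<in> \<theta> b"
  proof (rule ccontr)
    let ?T = "{c \<in> down \<A> a. p \<notin> \<theta> c}"
    assume "\<not> ?thesis"
    then have "is_join_in \<A> (down \<A> a) ?T a" by (rule is_join_of_parts_avoiding[OF a])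
    moreover have "?T \<subseteq> down \<A> a" by blast
    ultimately have "\<theta> a = (\<Union>c\<in>?T. \<theta> c)"
      using lc a unfolding locally_complete_rep_def by blast
    then show False using p by blast
  qed
qed

end

lemma pf_representation_antires_representation:
  assumes "AntiRes \<in> \<sigma>" "sigma_algebra \<sigma> \<A>" "pf_representation \<sigma> \<A> X \<theta>"
  shows "antires_representation \<A> \<theta>"
proof -
  have "\<forall>a\<in>carrier \<A>. \<forall>b\<in>carrier \<A>. antires \<A> a b \<in> carrier \<A>"
    using assms(1,2) by (simp add: sigma_algebra_def)
  moreover have "inj_on \<theta> (carrier \<A>)" "\<forall>a\<in>carrier \<A>. single_valued (\<theta> a)"
    "\<forall>a\<in>carrier \<A>. \<forall>b\<in>carrier \<A>. \<theta> (antires \<A> a b) = pf_antires (\<theta> a) (\<theta> b)"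
    using assms(1,3) by (simp_all add: pf_representation_def)
  ultimately show ?thesis by unfold_locales blast+
qed

theorem proposition4p4:
  fixes \<sigma> :: "opsym set" and \<A> :: "'a alg" and X :: "'x set"
    and \<theta> :: "'a \<Rightarrow> ('x \<times> 'x) set"
  assumes "AntiRes \<in> \<sigma>"
    and "sigma_algebra \<sigma> \<A>"
    and "pf_representation \<sigma> \<A> X \<theta>"
  shows "atomic_rep \<A> \<theta> \<longleftrightarrow> locally_complete_rep \<A> \<theta>"
proof -
  interpret antires_representation \<A> \<theta>
    using pf_representation_antires_representation[OF assms] .
  show ?thesis using locally_complete_if_atomic atomic_if_locally_complete by blast
qed

end
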